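(* Let $\mathcal{H}$ be a finite family of digraphs containing a directed path $P$ of length $p$. For each $H^*\in\mathcal{H}^+_p$, there exists a subgraph $H'\subseteq H^*$ such that $H'\in GPC(P)$.
   Context: Subgraphs are not necessarily induced. For a digraph $H$, $GPC(H)$ is the set of strongly connected digraphs $H\cup P_1\cup\dots\cup P_\ell$ (union of vertex and arc sets) where each $P_i$ is a directed path with both end-points in $V(H)$ and the ordered end-point pairs of the $P_i$ are pairwise distinct; $\{P_1,\dots,P_\ell\}$ is a witnessing collection of paths. $GPC(\mathcal{H})=\bigcup_{H\in\mathcal{H}}GPC(H)$. $\mathcal{H}^-_p$ is the set of digraphs in $GPC(\mathcal{H})$ admitting a witnessing collection of paths all of length at most $p-1$, and $\mathcal{H}^+_p=GPC(\mathcal{H})\setminus\mathcal{H}^-_p$. Path lengths are measured consistently for $P$ and for witnessing paths. *)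

theory Defs
  imports Main
begin

type_synonym 'a dg = "'a set \<times> ('a \<times> 'a) set"

definition verts :: "'a dg \<Rightarrow> 'a set" where "verts G = fst G"
definition arcs :: "'a dg \<Rightarrow> ('a \<times> 'a) set" where "arcs G = snd G"

definition digraph :: "'a dg \<Rightarrow> bool" where
  "digraph G \<longleftrightarrow> finite (verts G) \<and> arcs G \<subseteq> verts G \<times> verts G
     \<and> (\<forall>v. (v, v) \<notin> arcs G)"

definition subgraph :: "'a dg \<Rightarrow> 'a dg \<Rightarrow> bool" where
  "subgraph H G \<longleftrightarrow> verts H \<subseteq> verts G \<and> arcs H \<subseteq> arcs G \<and> arcs H \<subseteq> verts H \<times> verts H"

definition dg_union :: "'a dg \<Rightarrow> 'a dg \<Rightarrow> 'a dg" where
  "dg_union G H = (verts G \<union> verts H, arcs G \<union> arcs H)"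

definition dg_iso :: "'a dg \<Rightarrow> 'a dg \<Rightarrow> bool" where
  "dg_iso G H \<longleftrightarrow> (\<exists>f. bij_betw f (verts G) (verts H)
       \<and> arcs H = (\<lambda>(x, y). (f x, f y)) ` arcs G)"

definition vpath :: "'a list \<Rightarrow> bool" where
  "vpath xs \<longleftrightarrow> xs \<noteq> [] \<and> distinct xs"

definition path_dg :: "'a list \<Rightarrow> 'a dg" where
  "path_dg xs = (set xs, {(xs ! i, xs ! Suc i) | i. Suc i < length xs})"

text \<open>length = number of arcs\<close>
definition plen :: "'a list \<Rightarrow> nat" where
  "plen xs = length xs - 1"

definition is_dipath :: "'a dg \<Rightarrow> nat \<Rightarrow> bool" where
  "is_dipath P p \<longleftrightarrow> (\<exists>xs. vpath xs \<and> P = path_dg xs \<and> plen xs = p)"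

definition strongly_connected :: "'a dg \<Rightarrow> bool" where
  "strongly_connected G \<longleftrightarrow> (\<forall>u\<in>verts G. \<forall>v\<in>verts G. (u, v) \<in> (arcs G)\<^sup>*)"

text \<open>G = H \<union> P_1 \<union> ... \<union> P_l with witnessing collection Ps.\<close>
definition witnessing :: "'a dg \<Rightarrow> 'a dg \<Rightarrow> 'a list list \<Rightarrow> bool" where
  "witnessing H G Ps \<longleftrightarrow>
     (\<forall>xs\<in>set Ps. vpath xs \<and> hd xs \<in> verts H \<and> last xs \<in> verts H)
     \<and> distinct (map (\<lambda>xs. (hd xs, last xs)) Ps)
     \<and> G = foldr (\<lambda>xs K. dg_union K (path_dg xs)) Ps H
     \<and> strongly_connected G"

text \<open>GPC of a family, with digraphs of the family taken up to isomorphism.\<close>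
definition GPC :: "'a dg set \<Rightarrow> 'a dg set" where
  "GPC F = {G. \<exists>H\<in>F. \<exists>H0. dg_iso H H0 \<and> (\<exists>Ps. witnessing H0 G Ps)}"

definition GPC_minus :: "'a dg set \<Rightarrow> nat \<Rightarrow> 'a dg set" where
  "GPC_minus F p = {G. \<exists>H\<in>F. \<exists>H0. dg_iso H H0 \<and>
       (\<exists>Ps. witnessing H0 G Ps \<and> (\<forall>xs\<in>set Ps. plen xs < p))}"

definition GPC_plus :: "'a dg set \<Rightarrow> nat \<Rightarrow> 'a dg set" where
  "GPC_plus F p = GPC F - GPC_minus F p"

end

(*
  Since Hs lies in GPC(H) but not in H^-_p, one of its witnessing paths has length at least p;
  its initial segment with p arcs is a copy of P inside Hs. Strong connectivity of Hs yields a
  path Q in Hs from the last vertex of that segment back to its first one. Segment and Q together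
  form a closed walk, so their union is strongly connected, and the single path Q witnesses that
  it lies in GPC(P).
*)
theory Submission
  imports Defs "HOL-Library.Transitive_Closure_Table"
begin

definition is_walk :: "('a \<times> 'a) set \<Rightarrow> 'a list \<Rightarrow> bool" where
  "is_walk E xs \<longleftrightarrow> (\<forall>i. Suc i < length xs \<longrightarrow> (xs ! i, xs ! Suc i) \<in> E)"

lemma is_walk_iff_arcs_path_dg: "is_walk E xs \<longleftrightarrow> arcs (path_dg xs) \<subseteq> E"
  unfolding is_walk_def arcs_def path_dg_def by auto

lemma verts_dg_union [simp]: "verts (dg_union G H) = verts G \<union> verts H"
  and arcs_dg_union [simp]: "arcs (dg_union G H) = arcs G \<union> arcs H"
  unfolding dg_union_def verts_def arcs_def by simp_all

lemma verts_path_dg [simp]: "verts (path_dg xs) = set xs"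
  unfolding verts_def path_dg_def by simp

lemma arcs_path_dg_subset: "arcs (path_dg xs) \<subseteq> set xs \<times> set xs"
  unfolding arcs_def path_dg_def by auto

lemma arcs_path_dg: "arcs (path_dg xs) = (\<lambda>i. (xs ! i, xs ! Suc i)) ` {i. Suc i < length xs}"
  unfolding arcs_def path_dg_def by auto

lemma is_walk_take: "is_walk E xs \<Longrightarrow> is_walk E (take n xs)"
  unfolding is_walk_def by simp

lemma rtrancl_path_is_walk:
  assumes "rtrancl_path (\<lambda>u v. (u, v) \<in> E) x xs y"
  shows "is_walk E (x # xs) \<and> last (x # xs) = y"
  using assms
proof induction
  case (base x)
  then show ?case by (simp add: is_walk_def)
next
  case (step x y ys z)
  then show ?case by (auto simp: is_walk_def nth_Cons split: nat.split)
qed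

lemma rtrancl_imp_vpath_walk:
  assumes "(u, v) \<in> E\<^sup>*"
  obtains xs where "vpath xs" "hd xs = u" "last xs = v" "is_walk E xs"
proof -
  have "(\<lambda>a b. (a, b) \<in> E)\<^sup>*\<^sup>* u v" using assms by (simp add: rtranclp_rtrancl_eq)
  then obtain ys where "rtrancl_path (\<lambda>a b. (a, b) \<in> E) u ys v"
    by (auto simp: rtranclp_eq_rtrancl_path)
  then obtain ys' where "rtrancl_path (\<lambda>a b. (a, b) \<in> E) u ys' v" "distinct (u # ys')"
    by (rule rtrancl_path_distinct)
  then show thesis
    using that[of "u # ys'"] rtrancl_path_is_walk by (fastforce simp: vpath_def)
qed

lemma is_walk_rtrancl_nth:
  assumes "is_walk E xs" "i \<le> j" "j < length xs"
  shows "(xs ! i, xs ! j) \<in> E\<^sup>*"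
  using assms(2,3)
proof (induction j rule: dec_induct)
  case (step j)
  then have "(xs ! j, xs ! Suc j) \<in> E" using assms(1) by (simp add: is_walk_def)
  with step show ?case by (meson Suc_lessD rtrancl.rtrancl_into_rtrancl)
qed simp

lemma is_walk_rtrancl_hd:
  assumes "is_walk E xs" "w \<in> set xs"
  shows "(hd xs, w) \<in> E\<^sup>*"
proof -
  obtain i where "i < length xs" "w = xs ! i" using assms(2) by (auto simp: in_set_conv_nth)
  moreover have "xs \<noteq> []" using assms(2) by auto
  then have "hd xs = xs ! 0" by (rule hd_conv_nth)
  ultimately show ?thesis using is_walk_rtrancl_nth[OF assms(1)] by simp
qed

lemma is_walk_rtrancl_last:
  assumes "is_walk E xs" "w \<in> set xs"
  shows "(w, last xs) \<in> E\<^sup>*"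
proof -
  obtain i where "i < length xs" "w = xs ! i" using assms(2) by (auto simp: in_set_conv_nth)
  moreover have "xs \<noteq> []" using assms(2) by auto
  then have "last xs = xs ! (length xs - 1)" by (simp add: last_conv_nth)
  ultimately show ?thesis using is_walk_rtrancl_nth[OF assms(1)] by simp
qed

lemma is_walk_set_subset: "is_walk E xs \<Longrightarrow> set xs \<subseteq> insert (hd xs) (snd ` E)"
proof
  fix w assume "is_walk E xs" "w \<in> set xs"
  then obtain i where "i < length xs" "w = xs ! i" by (auto simp: in_set_conv_nth)
  then show "w \<in> insert (hd xs) (snd ` E)"
    using \<open>is_walk E xs\<close> by (cases i) (force simp: hd_conv_nth is_walk_def)+
qed

lemma strongly_connected_closed_walk:
  assumes "xs \<noteq> []" "ys \<noteq> []" "hd ys = last xs" "last ys = hd xs"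
  shows "strongly_connected (dg_union (path_dg xs) (path_dg ys))" (is "strongly_connected ?G")
proof -
  have walks: "is_walk (arcs ?G) xs" "is_walk (arcs ?G) ys"
    by (simp_all add: is_walk_iff_arcs_path_dg)
  have round_trip: "(hd xs, w) \<in> (arcs ?G)\<^sup>* \<and> (w, hd xs) \<in> (arcs ?G)\<^sup>*" if "w \<in> verts ?G" for w
  proof -
    have xs_ys: "(hd xs, hd ys) \<in> (arcs ?G)\<^sup>*"
      using is_walk_rtrancl_last[OF walks(1) hd_in_set[OF assms(1)]] assms(3) by simp
    have ys_xs: "(hd ys, hd xs) \<in> (arcs ?G)\<^sup>*"
      using is_walk_rtrancl_last[OF walks(2) hd_in_set[OF assms(2)]] assms(4) by simp
    from that consider "w \<in> set xs" | "w \<in> set ys" by auto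
    then show ?thesis
    proof cases
      case 1
      then show ?thesis using is_walk_rtrancl_hd[OF walks(1)] is_walk_rtrancl_last[OF walks(1)]
          ys_xs assms(3) by (metis rtrancl_trans)
    next
      case 2
      then show ?thesis using is_walk_rtrancl_hd[OF walks(2)] is_walk_rtrancl_last[OF walks(2)]
          xs_ys assms(4) by (metis rtrancl_trans)
    qed
  qed
  show ?thesis
    unfolding strongly_connected_def by (meson round_trip rtrancl_trans)
qed

lemma dg_iso_path_dg:
  assumes "vpath xs" "vpath ys" "length xs = length ys"
  shows "dg_iso (path_dg xs) (path_dg ys)"
proof -
  define n where "n = length xs"
  define f where "f = (!) ys \<circ> inv_into {..<n} ((!) xs)"
  have bij_xs: "bij_betw ((!) xs) {..<n} (set xs)"
    using assms(1) by (intro bij_betw_nth) (auto simp: vpath_def n_def)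
  have bij_ys: "bij_betw ((!) ys) {..<n} (set ys)"
    using assms by (intro bij_betw_nth) (auto simp: vpath_def n_def)
  have bij_f: "bij_betw f (set xs) (set ys)"
    unfolding f_def by (rule bij_betw_trans[OF bij_betw_inv_into[OF bij_xs] bij_ys])
  have f_nth: "f (xs ! i) = ys ! i" if "i < n" for i
    using bij_xs that unfolding f_def bij_betw_def by simp
  have "(\<lambda>(x, y). (f x, f y)) ` arcs (path_dg xs)
      = (\<lambda>i. (f (xs ! i), f (xs ! Suc i))) ` {i. Suc i < n}"
    by (simp add: arcs_path_dg image_image n_def)
  also have "\<dots> = (\<lambda>i. (ys ! i, ys ! Suc i)) ` {i. Suc i < n}"
    by (rule image_cong) (simp_all add: f_nth Suc_lessD)
  also have "\<dots> = arcs (path_dg ys)"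
    using assms(3) by (simp add: arcs_path_dg n_def)
  finally show ?thesis
    using bij_f unfolding dg_iso_def verts_path_dg by metis
qed

lemma dg_iso_arcs_closed:
  assumes "dg_iso H H'" "arcs H \<subseteq> verts H \<times> verts H"
  shows "arcs H' \<subseteq> verts H' \<times> verts H'"
proof -
  obtain f where "f ` verts H = verts H'" "arcs H' = (\<lambda>(x, y). (f x, f y)) ` arcs H"
    using assms(1) unfolding dg_iso_def bij_betw_def by blast
  with assms(2) show ?thesis by auto
qed

abbreviation path_union :: "'a list list \<Rightarrow> 'a dg \<Rightarrow> 'a dg" where
  "path_union Ps H \<equiv> foldr (\<lambda>xs K. dg_union K (path_dg xs)) Ps H"

lemma path_union_subgraph:
  assumes "xs \<in> set Ps"
  shows "subgraph (path_dg xs) (path_union Ps H)"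
proof -
  have "verts (path_dg xs) \<subseteq> verts (path_union Ps H) \<and> arcs (path_dg xs) \<subseteq> arcs (path_union Ps H)"
    using assms by (induction Ps) auto
  then show ?thesis
    using arcs_path_dg_subset[of xs] by (simp add: subgraph_def)
qed

lemma path_union_arcs_closed:
  assumes "arcs H \<subseteq> verts H \<times> verts H"
  shows "arcs (path_union Ps H) \<subseteq> verts (path_union Ps H) \<times> verts (path_union Ps H)"
proof (induction Ps)
  case (Cons xs Ps)
  then show ?case
    using arcs_path_dg_subset[of xs] by auto
qed (use assms in simp)

lemma strongly_connected_close_path:
  assumes "strongly_connected G" "arcs G \<subseteq> verts G \<times> verts G"
    and "vpath ys" "set ys \<subseteq> verts G" "is_walk (arcs G) ys"
  obtains Q where "subgraph (dg_union (path_dg ys) (path_dg Q)) G"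
    and "witnessing (path_dg ys) (dg_union (path_dg ys) (path_dg Q)) [Q]"
proof -
  have ends: "hd ys \<in> set ys" "last ys \<in> set ys" using assms(3) by (simp_all add: vpath_def)
  then have "(last ys, hd ys) \<in> (arcs G)\<^sup>*"
    using assms(1,4) unfolding strongly_connected_def by blast
  then obtain Q where Q: "vpath Q" "hd Q = last ys" "last Q = hd ys" "is_walk (arcs G) Q"
    by (rule rtrancl_imp_vpath_walk)
  have "insert (hd Q) (snd ` arcs G) \<subseteq> verts G" using Q(2) ends assms(2,4) by auto
  with is_walk_set_subset[OF Q(4)] have "set Q \<subseteq> verts G" by (rule order_trans)
  then have "subgraph (dg_union (path_dg ys) (path_dg Q)) G"
    using assms(4,5) Q(4) arcs_path_dg_subset[of ys] arcs_path_dg_subset[of Q]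
    by (auto simp: subgraph_def is_walk_iff_arcs_path_dg)
  moreover have "strongly_connected (dg_union (path_dg ys) (path_dg Q))"
    using Q assms(3) by (intro strongly_connected_closed_walk) (auto simp: vpath_def)
  then have "witnessing (path_dg ys) (dg_union (path_dg ys) (path_dg Q)) [Q]"
    using Q ends by (simp add: witnessing_def)
  ultimately show thesis by (rule that)
qed

lemma GPC_strongly_connected: "G \<in> GPC F \<Longrightarrow> strongly_connected G"
  unfolding GPC_def witnessing_def by blast

lemma GPC_arcs_closed:
  assumes "\<forall>H\<in>F. digraph H" "G \<in> GPC F"
  shows "arcs G \<subseteq> verts G \<times> verts G"
proof -
  obtain H H0 Ps where "H \<in> F" "dg_iso H H0" "G = path_union Ps H0"
    using assms(2) unfolding GPC_def witnessing_def by blast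
  moreover from this have "arcs H0 \<subseteq> verts H0 \<times> verts H0"
    using dg_iso_arcs_closed assms(1) unfolding digraph_def by blast
  ultimately show ?thesis using path_union_arcs_closed by simp
qed

lemma GPC_plus_contains_path:
  assumes "G \<in> GPC_plus F p"
  obtains ys where "vpath ys" "length ys = Suc p" "set ys \<subseteq> verts G" "is_walk (arcs G) ys"
proof -
  obtain H H0 Ps where "H \<in> F" "dg_iso H H0" and wit: "witnessing H0 G Ps"
    and "G \<notin> GPC_minus F p"
    using assms by (auto simp: GPC_plus_def GPC_def)
  then obtain xs where xs: "xs \<in> set Ps" "p \<le> plen xs"
    unfolding GPC_minus_def not_le[symmetric] by blast
  have "vpath xs" "G = path_union Ps H0" using wit xs(1) by (auto simp: witnessing_def)
  define ys where "ys = take (Suc p) xs"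
  have "Suc p \<le> length xs" using \<open>vpath xs\<close> xs(2) by (cases xs) (auto simp: vpath_def plen_def)
  then have "vpath ys" "length ys = Suc p"
    using \<open>vpath xs\<close> by (auto simp: ys_def vpath_def)
  moreover have "set ys \<subseteq> verts G" "is_walk (arcs G) ys"
    using path_union_subgraph[OF xs(1), of H0] unfolding \<open>G = path_union Ps H0\<close> ys_def
    by (auto simp: subgraph_def is_walk_iff_arcs_path_dg[symmetric] is_walk_take dest: in_set_takeD)
  ultimately show thesis by (rule that)
qed

theorem lemma24:
  fixes F :: "'a dg set" and P :: "'a dg" and p :: nat
  assumes "finite F"
    and "\<forall>H\<in>F. digraph H"
    and "P \<in> F"
    and "is_dipath P p"
    and "Hs \<in> GPC_plus F p"
  shows "\<exists>H'. subgraph H' Hs \<and> H' \<in> GPC {P}"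
proof -
  have "Hs \<in> GPC F" using assms(5) by (simp add: GPC_plus_def)
  obtain ys where ys: "vpath ys" "length ys = Suc p" "set ys \<subseteq> verts Hs" "is_walk (arcs Hs) ys"
    using assms(5) by (rule GPC_plus_contains_path)
  obtain Q where "subgraph (dg_union (path_dg ys) (path_dg Q)) Hs"
    and "witnessing (path_dg ys) (dg_union (path_dg ys) (path_dg Q)) [Q]"
    using GPC_strongly_connected[OF \<open>Hs \<in> GPC F\<close>] GPC_arcs_closed[OF assms(2) \<open>Hs \<in> GPC F\<close>]
      ys(1,3,4)
    by (rule strongly_connected_close_path)
  moreover obtain zs where zs: "vpath zs" "P = path_dg zs" "length zs = Suc p"
    using assms(4) by (auto simp: is_dipath_def plen_def vpath_def)
  have "dg_iso P (path_dg ys)"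
    unfolding zs(2) using zs(1,3) ys(1,2) by (intro dg_iso_path_dg) simp_all
  ultimately show ?thesis unfolding GPC_def by blast
qed

end
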